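(* Let $q(x)$ be a multilinear polynomial over $\mathbb{R}^n$ of degree at most $d$ with $\mathrm{sparsity}(q)=T$. Then for $\mathbf{x}$ uniformly distributed on $\{0,1\}^n$, the random variable $q(\mathbf{x})$ takes at least $\frac{1}{2d^2}\log(T)-2$ distinct output values.
   Context: A multilinear polynomial of degree at most $d$ is $q(x)=\sum_{|S|\le d}\widehat{q}(S)\prod_{i\in S}x_i$; $\mathrm{sparsity}(q)$ is its number of nonzero coefficients. $\log$ denotes the logarithm to base $2$. *)

theory Defs
  imports Complex_Main
begin

text \<open>A multilinear polynomial in variables x_0,...,x_{n-1} is given by its Fourier/monomial
coefficients c :: nat set => real, with c S = 0 unless S is a subset of {..<n}.\<close>

definition is_multilinear :: "nat \<Rightarrow> (nat set \<Rightarrow> real) \<Rightarrow> bool" where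
  "is_multilinear n c \<longleftrightarrow> (\<forall>S. c S \<noteq> 0 \<longrightarrow> S \<subseteq> {..<n})"

definition degree_le :: "(nat set \<Rightarrow> real) \<Rightarrow> nat \<Rightarrow> bool" where
  "degree_le c d \<longleftrightarrow> (\<forall>S. c S \<noteq> 0 \<longrightarrow> card S \<le> d)"

definition sparsity :: "(nat set \<Rightarrow> real) \<Rightarrow> nat" where
  "sparsity c = card {S. c S \<noteq> 0}"

definition ml_eval :: "nat \<Rightarrow> (nat set \<Rightarrow> real) \<Rightarrow> (nat \<Rightarrow> real) \<Rightarrow> real" where
  "ml_eval n c x = (\<Sum>S\<in>Pow {..<n}. c S * (\<Prod>i\<in>S. x i))"

definition bool_cube :: "nat \<Rightarrow> (nat \<Rightarrow> real) set" where
  "bool_cube n = {x. (\<forall>i<n. x i \<in> {0,1}) \<and> (\<forall>i\<ge>n. x i = 0)}"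

end

theory Submission
  imports Defs
begin

(* Encode a point of {0,1}^n by its support A, so that q becomes A \<mapsto> \<Sum>T\<subseteq>A. c T, and suppose q
   takes k values.  Each level-set indicator of q is a polynomial of degree k - 1 in q (Lagrange
   interpolation), hence has degree at most d (k - 1), so Parseval bounds its total influence by
   4 d (k - 1) times its mean.  Every change of the value of q is seen by two indicators; summing
   over the k levels, the total sensitivity \<Sum>i #{A. q A \<noteq> q (A xor {i})} is at most 2 d (k - 1) 2^n.
   Conversely, the derivative of q in the direction of a variable i occurring in q is a nonzero
   polynomial of degree at most d - 1, so by the Schwartz-Zippel argument on the cube i is sensitive
   at 2^(n-d+1) points at least.  Hence q depends on at most 2^d d (k - 1) < 2^(2d+k) variables and
   has at most 2^((2d+k)d) monomials of degree at most d. *)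

lemma sum_Pow_prod:
  fixes g :: "'a \<Rightarrow> bool \<Rightarrow> 'b::comm_semiring_1"
  assumes "finite N"
  shows "(\<Sum>A\<in>Pow N. \<Prod>i\<in>N. g i (i \<in> A)) = (\<Prod>i\<in>N. g i True + g i False)"
proof -
  have "(\<Prod>i\<in>N. g i (i \<in> A)) = (\<Prod>i\<in>A. g i True) * (\<Prod>i\<in>N - A. g i False)"
    if "A \<subseteq> N" for A
  proof -
    have "(\<Prod>i\<in>N. g i (i \<in> A)) = (\<Prod>i\<in>A. g i (i \<in> A)) * (\<Prod>i\<in>N - A. g i (i \<in> A))"
      using that assms
      by (subst prod.subset_diff[of A N]) (auto simp: mult.commute intro: finite_subset)
    then show ?thesis by simp
  qed
  then show ?thesis by (simp add: prod_add[OF assms])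
qed

lemma card_Pow_insert_filter:
  assumes "finite M" "j \<notin> M"
  shows "card {B. B \<subseteq> insert j M \<and> P B}
           = card {A. A \<subseteq> M \<and> P A} + card {A. A \<subseteq> M \<and> P (insert j A)}"
proof -
  have "{B. B \<subseteq> insert j M \<and> P B}
          = {A. A \<subseteq> M \<and> P A} \<union> insert j ` {A. A \<subseteq> M \<and> P (insert j A)}"
  proof (intro equalityI subsetI)
    fix B assume B: "B \<in> {B. B \<subseteq> insert j M \<and> P B}"
    show "B \<in> {A. A \<subseteq> M \<and> P A} \<union> insert j ` {A. A \<subseteq> M \<and> P (insert j A)}"
    proof (cases "j \<in> B")
      case True
      then have "B = insert j (B - {j})" "B - {j} \<subseteq> M" using B by auto
      then show ?thesis using B by (metis (mono_tags, lifting) UnI2 image_eqI mem_Collect_eq)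
    next
      case False
      then show ?thesis using B by (simp add: subset_insert)
    qed
  qed auto
  moreover have "card (insert j ` {A. A \<subseteq> M \<and> P (insert j A)})
                   = card {A. A \<subseteq> M \<and> P (insert j A)}"
  proof (rule card_image, rule inj_onI)
    fix A B assume "A \<in> {A. A \<subseteq> M \<and> P (insert j A)}" "B \<in> {A. A \<subseteq> M \<and> P (insert j A)}"
      and "insert j A = insert j B"
    then show "A = B" using assms(2) insert_ident[of j A B] by blast
  qed
  moreover have "{A. A \<subseteq> M \<and> P A} \<inter> insert j ` {A. A \<subseteq> M \<and> P (insert j A)} = {}"
    using assms(2) by blast
  ultimately show ?thesis
    using assms(1) by (simp add: card_Un_disjoint)
qed

lemma card_small_subsets_le:
  assumes "finite R"
  shows "card {S. S \<subseteq> R \<and> card S \<le> d} \<le> (card R + 1) ^ d"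
proof -
  have "{S. S \<subseteq> R \<and> card S \<le> d} = (\<Union>j\<in>{..d}. {S. S \<subseteq> R \<and> card S = j})" by auto
  then have "card {S. S \<subseteq> R \<and> card S \<le> d} \<le> (\<Sum>j\<le>d. card {S. S \<subseteq> R \<and> card S = j})"
    using card_UN_le[of "{..d}" "\<lambda>j. {S. S \<subseteq> R \<and> card S = j}"] by simp
  also have "\<dots> = (\<Sum>j\<le>d. card R choose j)" using n_subsets[OF assms] by simp
  also have "\<dots> \<le> (\<Sum>j\<le>d. (d choose j) * card R ^ j)"
  proof (intro sum_mono)
    fix j assume "j \<in> {..d}"
    then have "1 \<le> d choose j" by (simp add: Suc_le_eq)
    moreover have "card R choose j \<le> card R ^ j"
      by (cases "j \<le> card R") (auto simp: binomial_le_pow binomial_eq_0)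
    ultimately show "card R choose j \<le> (d choose j) * card R ^ j"
      by (metis le_trans mult_1 mult_le_mono1)
  qed
  also have "\<dots> = (card R + 1) ^ d" using binomial_ring[of "card R" 1 d] by simp
  finally show ?thesis .
qed

lemma prod_of_bool_mem:
  assumes "finite S"
  shows "(\<Prod>i\<in>S. of_bool (i \<in> A)) = (of_bool (S \<subseteq> A) :: 'b::comm_semiring_1)"
  using assms by (induction S rule: finite_induct) auto

definition flip :: "'a \<Rightarrow> 'a set \<Rightarrow> 'a set" where
  "flip i A = (if i \<in> A then A - {i} else insert i A)"

lemma flip_flip [simp]: "flip i (flip i A) = A"
  by (auto simp: flip_def)

lemma flip_subset: "i \<in> N \<Longrightarrow> A \<subseteq> N \<Longrightarrow> flip i A \<subseteq> N"
  by (auto simp: flip_def)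

section \<open>The Schwartz-Zippel lemma on the Boolean cube\<close>

(* Points of the cube {0,1}^N are encoded by their supports A \<subseteq> N: zeta a A is the value at
   that point of the multilinear polynomial with coefficients a. *)
definition zeta :: "('a set \<Rightarrow> real) \<Rightarrow> 'a set \<Rightarrow> real" where
  "zeta a A = (\<Sum>T\<in>Pow A. a T)"

definition coeffs_within :: "'a set \<Rightarrow> nat \<Rightarrow> ('a set \<Rightarrow> real) \<Rightarrow> bool" where
  "coeffs_within N D a \<longleftrightarrow> (\<forall>T. a T \<noteq> 0 \<longrightarrow> T \<subseteq> N \<and> card T \<le> D)"

definition deriv_coeffs :: "'a \<Rightarrow> ('a set \<Rightarrow> real) \<Rightarrow> 'a set \<Rightarrow> real" where
  "deriv_coeffs j a T = (if j \<in> T then 0 else a (insert j T))"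

lemma deriv_coeffs_Diff: "j \<in> T \<Longrightarrow> deriv_coeffs j a (T - {j}) = a T"
  by (simp add: deriv_coeffs_def insert_absorb)

lemma zeta_insert:
  assumes "finite A" "j \<notin> A"
  shows "zeta a (insert j A) = zeta a A + zeta (deriv_coeffs j a) A"
proof -
  have "(\<Sum>T\<in>insert j ` Pow A. a T) = (\<Sum>T\<in>Pow A. a (insert j T))"
    using assms(2) by (intro sum.reindex_cong[of "insert j"]) (auto simp: inj_on_def)
  also have "\<dots> = zeta (deriv_coeffs j a) A"
    unfolding zeta_def deriv_coeffs_def using assms(2) by (intro sum.cong) auto
  finally show ?thesis
    unfolding zeta_def Pow_insert using assms by (subst sum.union_disjoint) auto
qed

lemma coeffs_within_degree_pos:
  assumes "finite N" "coeffs_within N D a" "a S \<noteq> 0" "S \<noteq> {}"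
  shows "0 < D"
proof -
  have "S \<subseteq> N" "card S \<le> D" using assms(2,3) by (auto simp: coeffs_within_def)
  moreover have "0 < card S"
    using \<open>S \<subseteq> N\<close> assms(1,4) by (auto simp: card_gt_0_iff intro: finite_subset)
  ultimately show ?thesis by linarith
qed

lemma coeffs_within_deriv_coeffs:
  assumes "finite N" "j \<notin> N" "coeffs_within (insert j N) D a"
  shows "coeffs_within N (D - 1) (deriv_coeffs j a)"
  unfolding coeffs_within_def
proof (intro allI impI)
  fix T assume "deriv_coeffs j a T \<noteq> 0"
  then have "j \<notin> T" "a (insert j T) \<noteq> 0" by (auto simp: deriv_coeffs_def split: if_splits)
  then have "insert j T \<subseteq> insert j N" "card (insert j T) \<le> D"
    using assms(3) unfolding coeffs_within_def by blast+
  moreover have "finite T"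
    using calculation(1) \<open>j \<notin> T\<close> by (intro finite_subset[OF _ assms(1)]) (simp add: subset_insert)
  ultimately show "T \<subseteq> N \<and> card T \<le> D - 1" using \<open>j \<notin> T\<close> by auto
qed

lemma coeffs_within_of_deriv_coeffs_eq_0:
  assumes "coeffs_within (insert j N) D a" "\<And>T. deriv_coeffs j a T = 0"
  shows "coeffs_within N D a"
  unfolding coeffs_within_def
proof (intro allI impI)
  fix T assume "a T \<noteq> 0"
  then have "j \<notin> T" using assms(2) deriv_coeffs_Diff[of j T a] by auto
  then show "T \<subseteq> N \<and> card T \<le> D"
    using \<open>a T \<noteq> 0\<close> assms(1) unfolding coeffs_within_def by blast
qed

lemma card_zeta_nonzero_insert:
  assumes "finite M" "j \<notin> M"
  shows "card {B. B \<subseteq> insert j M \<and> zeta a B \<noteq> 0}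
           = card {A. A \<subseteq> M \<and> zeta a A \<noteq> 0}
             + card {A. A \<subseteq> M \<and> zeta a A + zeta (deriv_coeffs j a) A \<noteq> 0}"
proof -
  have "zeta a (insert j A) = zeta a A + zeta (deriv_coeffs j a) A" if "A \<subseteq> M" for A
    using that assms by (intro zeta_insert) (auto intro: finite_subset)
  then have "{A. A \<subseteq> M \<and> zeta a (insert j A) \<noteq> 0}
               = {A. A \<subseteq> M \<and> zeta a A + zeta (deriv_coeffs j a) A \<noteq> 0}"
    by auto
  then show ?thesis
    using card_Pow_insert_filter[OF assms, of "\<lambda>B. zeta a B \<noteq> 0"] by simp
qed

lemma card_zeta_nonzero_ge:
  assumes "finite M" "coeffs_within M e a" "a T0 \<noteq> 0"
  shows "2 ^ card M \<le> 2 ^ e * card {A. A \<subseteq> M \<and> zeta a A \<noteq> 0}"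
  using assms
proof (induction M arbitrary: a e T0 rule: finite_induct)
  case empty
  then have "T0 = {}" by (auto simp: coeffs_within_def)
  then have "{A. A \<subseteq> {} \<and> zeta a A \<noteq> 0} = {{}}"
    using empty.prems(2) by (auto simp: zeta_def)
  then show ?case by simp
next
  case (insert j M)
  let ?b = "deriv_coeffs j a"
  let ?nz = "\<lambda>g. card {A. A \<subseteq> M \<and> g A \<noteq> 0}"
  note split = card_zeta_nonzero_insert[OF insert.hyps, of a]
  show ?case
  proof (cases "\<forall>T. ?b T = 0")
    case True
    have "coeffs_within M e a"
      by (rule coeffs_within_of_deriv_coeffs_eq_0[OF insert.prems(1) True[rule_format]])
    then have "2 ^ card M \<le> 2 ^ e * ?nz (zeta a)"
      using insert.IH insert.prems(2) by blast
    moreover have "?nz (\<lambda>A. zeta a A + zeta ?b A) = ?nz (zeta a)"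
      using True by (simp add: zeta_def)
    ultimately show ?thesis
      unfolding split using insert.hyps by (simp add: add_mult_distrib2)
  next
    case False
    then obtain T1 where T1: "?b T1 \<noteq> 0" by blast
    then have "a (insert j T1) \<noteq> 0" by (auto simp: deriv_coeffs_def split: if_splits)
    then have "0 < e"
      using insert.hyps(1) insert.prems(1) by (intro coeffs_within_degree_pos) auto
    have "coeffs_within M (e - 1) ?b"
      using insert.hyps insert.prems(1) by (rule coeffs_within_deriv_coeffs)
    then have IH: "2 ^ card M \<le> 2 ^ (e - 1) * ?nz (zeta ?b)"
      using insert.IH T1 by blast
    have "{A. A \<subseteq> M \<and> zeta ?b A \<noteq> 0}
            \<subseteq> {A. A \<subseteq> M \<and> zeta a A \<noteq> 0} \<union> {A. A \<subseteq> M \<and> zeta a A + zeta ?b A \<noteq> 0}"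
      by auto
    then have "?nz (zeta ?b) \<le> ?nz (zeta a) + ?nz (\<lambda>A. zeta a A + zeta ?b A)"
      using insert.hyps(1) by (intro le_trans[OF card_mono card_Un_le]) auto
    moreover have "2 ^ card (insert j M) \<le> 2 ^ e * ?nz (zeta ?b)"
      using IH insert.hyps \<open>0 < e\<close> by (cases e) auto
    ultimately show ?thesis
      unfolding split by (meson le_trans mult_le_mono2)
  qed
qed

lemma card_sensitive_eq:
  assumes "finite M" "i \<notin> M"
  shows "card {A. A \<subseteq> insert i M \<and> zeta c (flip i A) \<noteq> zeta c A}
           = 2 * card {A. A \<subseteq> M \<and> zeta (deriv_coeffs i c) A \<noteq> 0}"
proof -
  have "zeta c (flip i A) \<noteq> zeta c A \<longleftrightarrow> zeta (deriv_coeffs i c) A \<noteq> 0"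
    and "zeta c (flip i (insert i A)) \<noteq> zeta c (insert i A) \<longleftrightarrow> zeta (deriv_coeffs i c) A \<noteq> 0"
    if "A \<subseteq> M" for A
  proof -
    have "finite A" "i \<notin> A" using that assms finite_subset by auto
    then show "zeta c (flip i A) \<noteq> zeta c A \<longleftrightarrow> zeta (deriv_coeffs i c) A \<noteq> 0"
      and "zeta c (flip i (insert i A)) \<noteq> zeta c (insert i A) \<longleftrightarrow> zeta (deriv_coeffs i c) A \<noteq> 0"
      by (auto simp: flip_def zeta_insert)
  qed
  then show ?thesis
    unfolding card_Pow_insert_filter[OF assms] by (simp cong: conj_cong)
qed

lemma card_sensitive_ge:
  assumes "finite N" "coeffs_within N d c" "c S \<noteq> 0" "i \<in> S"
  shows "2 * 2 ^ card N \<le> 2 ^ d * card {A. A \<subseteq> N \<and> zeta c (flip i A) \<noteq> zeta c A}"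
proof -
  define M where "M = N - {i}"
  have "i \<in> N" using assms(2-4) by (auto simp: coeffs_within_def)
  then have M: "finite M" "i \<notin> M" "N = insert i M" using assms(1) by (auto simp: M_def)
  have "coeffs_within M (d - 1) (deriv_coeffs i c)"
    using M assms(2) by (intro coeffs_within_deriv_coeffs) auto
  moreover have "deriv_coeffs i c (S - {i}) \<noteq> 0"
    using assms(3,4) by (simp add: deriv_coeffs_Diff)
  ultimately have "2 ^ card M \<le> 2 ^ (d - 1) * card {A. A \<subseteq> M \<and> zeta (deriv_coeffs i c) A \<noteq> 0}"
    by (rule card_zeta_nonzero_ge[OF M(1)])
  moreover have "0 < d"
    using assms by (intro coeffs_within_degree_pos) auto
  ultimately show ?thesis
    unfolding M(3) card_sensitive_eq[OF M(1,2)] using M(1,2) by (cases d) auto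
qed

section \<open>Low-degree functions on the cube and their Fourier spectrum\<close>

(* Functions that agree on Pow N with a polynomial of degree at most D in the coordinates of the
   cube; of_bool (T \<subseteq> A) is the monomial \<Prod>i\<in>T. x i at the point with support A. *)
inductive cube_poly :: "'a set \<Rightarrow> nat \<Rightarrow> ('a set \<Rightarrow> real) \<Rightarrow> bool" for N D where
  monomial: "T \<subseteq> N \<Longrightarrow> card T \<le> D \<Longrightarrow> cube_poly N D (\<lambda>A. of_bool (T \<subseteq> A))"
| scale: "cube_poly N D F \<Longrightarrow> cube_poly N D (\<lambda>A. r * F A)"
| add: "cube_poly N D F \<Longrightarrow> cube_poly N D G \<Longrightarrow> cube_poly N D (\<lambda>A. F A + G A)"
| cong: "cube_poly N D F \<Longrightarrow> (\<And>A. A \<subseteq> N \<Longrightarrow> F A = G A) \<Longrightarrow> cube_poly N D G"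

lemma cube_poly_const: "cube_poly N D (\<lambda>_. r)"
  using cube_poly.scale[OF cube_poly.monomial[of "{}" N D], of r] by simp

lemma cube_poly_mult:
  assumes "cube_poly N D1 F" "cube_poly N D2 G"
  shows "cube_poly N (D1 + D2) (\<lambda>A. F A * G A)"
  using assms
proof (induction arbitrary: G rule: cube_poly.induct)
  case (monomial T)
  from monomial.prems show ?case
  proof (induction rule: cube_poly.induct)
    case (monomial U)
    have "card (T \<union> U) \<le> D1 + D2"
      using card_Un_le[of T U] monomial.hyps \<open>card T \<le> D1\<close> by linarith
    then have "cube_poly N (D1 + D2) (\<lambda>A. of_bool (T \<union> U \<subseteq> A))"
      using monomial.hyps \<open>T \<subseteq> N\<close> by (intro cube_poly.monomial) auto
    then show ?case by (rule cube_poly.cong) simp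
  next
    case (scale G r)
    from cube_poly.scale[OF scale.IH, of r] show ?case by (rule cube_poly.cong) simp
  next
    case (add G G')
    from cube_poly.add[OF add.IH] show ?case by (rule cube_poly.cong) (simp add: distrib_left)
  next
    case (cong G G')
    from cong.IH show ?case by (rule cube_poly.cong) (simp add: cong.hyps)
  qed
next
  case (scale F r)
  from cube_poly.scale[OF scale.IH[OF scale.prems], of r] show ?case
    by (rule cube_poly.cong) simp
next
  case (add F F')
  from cube_poly.add[OF add.IH(1)[OF add.prems] add.IH(2)[OF add.prems]] show ?case
    by (rule cube_poly.cong) (simp add: distrib_right)
next
  case (cong F F')
  from cong.IH[OF cong.prems] show ?case by (rule cube_poly.cong) (simp add: cong.hyps)
qed

lemma cube_poly_sum:
  assumes "finite I" "\<And>i. i \<in> I \<Longrightarrow> cube_poly N D (F i)"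
  shows "cube_poly N D (\<lambda>A. \<Sum>i\<in>I. F i A)"
  using assms by (induction I rule: finite_induct) (auto intro: cube_poly.add cube_poly_const)

lemma cube_poly_prod:
  assumes "finite W" "\<And>u. u \<in> W \<Longrightarrow> cube_poly N D (F u)"
  shows "cube_poly N (D * card W) (\<lambda>A. \<Prod>u\<in>W. F u A)"
  using assms
proof (induction W rule: finite_induct)
  case empty
  show ?case by (simp add: cube_poly_const)
next
  case (insert u W)
  then have "cube_poly N (D + D * card W) (\<lambda>A. F u A * (\<Prod>u\<in>W. F u A))"
    by (intro cube_poly_mult) auto
  then show ?case using insert.hyps by simp
qed

lemma cube_poly_zeta:
  assumes "finite N" "coeffs_within N D a"
  shows "cube_poly N D (zeta a)"
proof -
  have supp: "{T. a T \<noteq> 0} \<subseteq> Pow N"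
    using assms(2) by (auto simp: coeffs_within_def)
  then have "finite {T. a T \<noteq> 0}"
    using assms(1) finite_subset by blast
  then have "cube_poly N D (\<lambda>A. \<Sum>T\<in>{T. a T \<noteq> 0}. a T * of_bool (T \<subseteq> A))"
    using assms(2) unfolding coeffs_within_def
    by (intro cube_poly_sum cube_poly.scale cube_poly.monomial) auto
  then show ?thesis
  proof (rule cube_poly.cong)
    fix A assume "A \<subseteq> N"
    have "zeta a A = (\<Sum>T\<in>{T. a T \<noteq> 0} \<inter> {T. T \<subseteq> A}. a T)"
      unfolding zeta_def using \<open>A \<subseteq> N\<close> assms(1) supp
      by (intro sum.mono_neutral_right) (auto intro: finite_subset)
    also have "\<dots> = (\<Sum>T\<in>{T. a T \<noteq> 0}. if T \<subseteq> A then a T else 0)"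
      using \<open>finite {T. a T \<noteq> 0}\<close> by (simp add: sum.inter_restrict)
    also have "\<dots> = (\<Sum>T\<in>{T. a T \<noteq> 0}. a T * of_bool (T \<subseteq> A))"
      by (intro sum.cong) auto
    finally show "(\<Sum>T\<in>{T. a T \<noteq> 0}. a T * of_bool (T \<subseteq> A)) = zeta a A" ..
  qed
qed

lemma cube_poly_level_indicator:
  assumes "cube_poly N D F" "finite V" "F ` Pow N \<subseteq> V" "v \<in> V"
  shows "cube_poly N (D * (card V - 1)) (\<lambda>A. of_bool (F A = v))"
proof -
  \<comment> \<open>Lagrange interpolation through the values of F\<close>
  have "cube_poly N (D * card (V - {v})) (\<lambda>A. \<Prod>u\<in>V - {v}. (F A - u) / (v - u))"
  proof (rule cube_poly_prod)
    fix u
    have "cube_poly N D (\<lambda>A. 1 / (v - u) * F A + - u / (v - u))"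
      by (intro cube_poly.add cube_poly.scale assms(1) cube_poly_const)
    then show "cube_poly N D (\<lambda>A. (F A - u) / (v - u))"
      by (rule cube_poly.cong) (simp add: diff_divide_distrib)
  qed (use assms(2) in simp)
  then show ?thesis
    unfolding card_Diff_singleton[OF assms(4)]
  proof (rule cube_poly.cong)
    fix A assume "A \<subseteq> N"
    then have "F A \<in> V" using assms(3) by auto
    show "(\<Prod>u\<in>V - {v}. (F A - u) / (v - u)) = of_bool (F A = v)"
    proof (cases "F A = v")
      case True
      then show ?thesis by simp
    next
      case False
      then have "(\<Prod>u\<in>V - {v}. (F A - u) / (v - u)) = 0"
        using \<open>F A \<in> V\<close> assms(2) by (intro prod_zero) auto
      then show ?thesis using False by simp
    qed
  qed
qed

definition walsh :: "'a set \<Rightarrow> 'a set \<Rightarrow> real" where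
  "walsh S A = (-1) ^ card (S \<inter> A)"

definition fourier :: "'a set \<Rightarrow> ('a set \<Rightarrow> real) \<Rightarrow> 'a set \<Rightarrow> real" where
  "fourier N F S = (\<Sum>A\<in>Pow N. F A * walsh S A)"

lemma walsh_eq_prod:
  assumes "finite N" "S \<subseteq> N"
  shows "walsh S A = (\<Prod>i\<in>N. if i \<in> S \<and> i \<in> A then -1 else 1)"
proof -
  have "{i \<in> N. i \<in> S \<and> i \<in> A} = S \<inter> A" using assms(2) by auto
  then show ?thesis
    unfolding walsh_def
    using prod.inter_filter[OF assms(1), of "\<lambda>_. -1::real" "\<lambda>i. i \<in> S \<and> i \<in> A"] by simp
qed

lemma walsh_flip:
  assumes "finite S"
  shows "walsh S (flip i A) = (if i \<in> S then -1 else 1) * walsh S A"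
proof -
  have "walsh S (flip i A) = (\<Prod>j\<in>S. (if j = i then -1 else 1) * (if j \<in> A then -1 else 1))"
    unfolding walsh_eq_prod[OF assms order_refl] by (intro prod.cong) (auto simp: flip_def)
  also have "\<dots> = (if i \<in> S then -1 else 1) * walsh S A"
    unfolding prod.distrib walsh_eq_prod[OF assms order_refl]
    using prod.delta[OF assms, of i "\<lambda>_. -1::real"] by simp
  finally show ?thesis .
qed

lemma walsh_orthogonal:
  assumes "finite N" "A \<subseteq> N" "B \<subseteq> N"
  shows "(\<Sum>S\<in>Pow N. walsh S A * walsh S B) = (if A = B then 2 ^ card N else 0)"
proof -
  have "(\<Sum>S\<in>Pow N. walsh S A * walsh S B)
          = (\<Sum>S\<in>Pow N. \<Prod>i\<in>N. (if i \<in> S \<and> i \<in> A then -1 else 1) * (if i \<in> S \<and> i \<in> B then -1 else 1))"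
    by (intro sum.cong refl) (simp add: walsh_eq_prod[OF assms(1)] prod.distrib)
  also have "\<dots> = (\<Prod>i\<in>N. (if i \<in> A then -1 else 1) * (if i \<in> B then -1 else 1) + 1)"
    using sum_Pow_prod[OF assms(1),
        of "\<lambda>i s. (if s \<and> i \<in> A then -1 else 1) * (if s \<and> i \<in> B then -1 else (1::real))"]
    by simp
  also have "\<dots> = (if A = B then 2 ^ card N else 0)"
  proof (cases "A = B")
    case False
    then obtain i where "i \<in> N" "(i \<in> A) \<noteq> (i \<in> B)" using assms(2,3) by blast
    then have "(\<Prod>i\<in>N. (if i \<in> A then -1 else 1) * (if i \<in> B then -1 else 1) + 1::real) = 0"
      using assms(1) by (intro prod_zero) auto
    then show ?thesis using False by simp
  next
    case True
    have "(\<Prod>i\<in>N. (if i \<in> A then -1 else 1) * (if i \<in> A then -1 else 1) + 1::real) = (\<Prod>i\<in>N. 2)"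
      by (intro prod.cong) auto
    then show ?thesis using True by simp
  qed
  finally show ?thesis .
qed

lemma fourier_monomial_eq_0:
  assumes "finite N" "S \<subseteq> N" "T \<subseteq> N" "\<not> S \<subseteq> T"
  shows "fourier N (\<lambda>A. of_bool (T \<subseteq> A)) S = 0"
proof -
  have "of_bool (T \<subseteq> A) * walsh S A
          = (\<Prod>i\<in>N. (if i \<in> T \<and> i \<notin> A then 0 else 1) * (if i \<in> S \<and> i \<in> A then -1 else 1))"
    for A
  proof -
    have "of_bool (T \<subseteq> A) = (\<Prod>i\<in>N. if i \<in> T \<and> i \<notin> A then 0 else 1::real)"
      using assms(1,3) by (cases "T \<subseteq> A") (auto intro!: prod.neutral prod_zero)
    then show ?thesis by (simp add: walsh_eq_prod[OF assms(1,2)] prod.distrib)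
  qed
  then have "fourier N (\<lambda>A. of_bool (T \<subseteq> A)) S
               = (\<Prod>i\<in>N. (if i \<in> S then -1 else 1) + (if i \<in> T then 0 else 1))"
    unfolding fourier_def
    using sum_Pow_prod[OF assms(1),
        of "\<lambda>i s. (if i \<in> T \<and> \<not> s then 0 else 1) * (if i \<in> S \<and> s then -1 else (1::real))"]
    by simp
  also have "\<dots> = 0"
    using assms by (intro prod_zero) auto
  finally show ?thesis .
qed

lemma parseval:
  assumes "finite N"
  shows "(\<Sum>S\<in>Pow N. (fourier N F S)^2) = 2 ^ card N * (\<Sum>A\<in>Pow N. (F A)^2)"
proof -
  have "(\<Sum>S\<in>Pow N. (fourier N F S)^2)
          = (\<Sum>S\<in>Pow N. \<Sum>A\<in>Pow N. \<Sum>B\<in>Pow N. F A * F B * (walsh S A * walsh S B))"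
    unfolding fourier_def power2_eq_square sum_product by (simp only: mult_ac)
  also have "\<dots> = (\<Sum>A\<in>Pow N. \<Sum>B\<in>Pow N. F A * F B * (\<Sum>S\<in>Pow N. walsh S A * walsh S B))"
    by (subst sum.swap, rule sum.cong, simp, subst sum.swap) (simp add: sum_distrib_left)
  also have "\<dots> = (\<Sum>A\<in>Pow N. \<Sum>B\<in>Pow N. if A = B then F A * F B * 2 ^ card N else 0)"
    using assms by (intro sum.cong refl) (simp add: walsh_orthogonal)
  also have "\<dots> = 2 ^ card N * (\<Sum>A\<in>Pow N. (F A)^2)"
    using assms by (simp add: sum_distrib_left power2_eq_square mult_ac)
  finally show ?thesis .
qed

lemma fourier_flip_diff:
  assumes "finite N" "i \<in> N" "S \<subseteq> N"
  shows "fourier N (\<lambda>A. F A - F (flip i A)) S = (if i \<in> S then 2 else 0) * fourier N F S"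
proof -
  have "finite S" using assms(1,3) finite_subset by blast
  have "(\<Sum>A\<in>Pow N. F (flip i A) * walsh S A) = (\<Sum>A\<in>Pow N. F A * walsh S (flip i A))"
    using assms(2)
    by (intro sum.reindex_bij_witness[of _ "flip i" "flip i"]) (auto simp: flip_subset)
  also have "\<dots> = (if i \<in> S then -1 else 1) * fourier N F S"
    unfolding fourier_def sum_distrib_left
    by (intro sum.cong refl) (simp add: walsh_flip[OF \<open>finite S\<close>])
  finally show ?thesis
    unfolding fourier_def by (simp add: left_diff_distrib sum_subtractf)
qed

lemma fourier_eq_0_above_degree:
  assumes "cube_poly N D F" "finite N" "S \<subseteq> N" "D < card S"
  shows "fourier N F S = 0"
  using assms(1)
proof (induction rule: cube_poly.induct)
  case (monomial T)
  then have "\<not> S \<subseteq> T"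
    using assms(2,4) card_mono[of T S] finite_subset by fastforce
  then show ?case using fourier_monomial_eq_0 assms(2,3) monomial.hyps by blast
next
  case (scale F r)
  then show ?case by (simp add: fourier_def sum_distrib_left[symmetric] mult.assoc)
next
  case (add F G)
  then show ?case by (simp add: fourier_def distrib_right sum.distrib)
next
  case (cong F G)
  then show ?case by (simp add: fourier_def)
qed

lemma total_influence_le:
  assumes "cube_poly N D F" "finite N"
  shows "(\<Sum>i\<in>N. \<Sum>A\<in>Pow N. (F A - F (flip i A))^2) \<le> 4 * real D * (\<Sum>A\<in>Pow N. (F A)^2)"
proof -
  have "2 ^ card N * (\<Sum>i\<in>N. \<Sum>A\<in>Pow N. (F A - F (flip i A))^2)
          = (\<Sum>i\<in>N. \<Sum>S\<in>Pow N. (fourier N (\<lambda>A. F A - F (flip i A)) S)^2)"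
    by (simp add: sum_distrib_left parseval assms(2))
  also have "\<dots> = (\<Sum>S\<in>Pow N. \<Sum>i\<in>N. if i \<in> S then 4 * (fourier N F S)^2 else 0)"
    by (subst sum.swap) (auto intro!: sum.cong simp: fourier_flip_diff assms(2) power_mult_distrib)
  also have "\<dots> = (\<Sum>S\<in>Pow N. 4 * card S * (fourier N F S)^2)"
    using assms(2) by (intro sum.cong refl) (auto simp: sum.If_cases Int_absorb1)
  also have "\<dots> \<le> (\<Sum>S\<in>Pow N. 4 * D * (fourier N F S)^2)"
  proof (intro sum_mono)
    fix S assume "S \<in> Pow N"
    then show "4 * card S * (fourier N F S)^2 \<le> 4 * D * (fourier N F S)^2"
      using fourier_eq_0_above_degree[OF assms, of S]
      by (cases "card S \<le> D") (auto intro: mult_right_mono)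
  qed
  also have "\<dots> = 2 ^ card N * (4 * D * (\<Sum>A\<in>Pow N. (F A)^2))"
    by (simp add: sum_distrib_left[symmetric] parseval assms(2))
  finally show ?thesis by simp
qed

section \<open>Total sensitivity and the number of values\<close>

lemma sum_sq_indicator_diff:
  assumes "finite V" "x \<in> V" "y \<in> V"
  shows "(\<Sum>v\<in>V. (of_bool (x = v) - of_bool (y = v))^2) = (2::real) * of_bool (x \<noteq> y)"
proof (cases "x = y")
  case False
  then have "(\<Sum>v\<in>V. (of_bool (x = v) - of_bool (y = v))^2)
               = (\<Sum>v\<in>V. (if x = v then 1 else 0) + (if y = v then 1 else 0) :: real)"
    by (intro sum.cong) auto
  then show ?thesis
    using assms False by (simp add: sum.distrib)
qed simp

lemma sum_card_sensitive_le:
  assumes "cube_poly N D F" "finite N"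
  shows "(\<Sum>i\<in>N. card {A. A \<subseteq> N \<and> F (flip i A) \<noteq> F A})
           \<le> 2 * D * (card (F ` Pow N) - 1) * 2 ^ card N"
proof -
  define V where "V = F ` Pow N"
  define L where "L v A = (of_bool (F A = v) :: real)" for v A
  have "finite V" using assms(2) by (simp add: V_def)
  have F_in_V: "F A \<in> V" if "A \<subseteq> N" for A using that by (simp add: V_def)
  have "2 * real (\<Sum>i\<in>N. card {A. A \<subseteq> N \<and> F (flip i A) \<noteq> F A})
          = (\<Sum>i\<in>N. \<Sum>A\<in>Pow N. 2 * of_bool (F A \<noteq> F (flip i A)))"
    using assms(2)
    by (simp add: sum_distrib_left Int_def Pow_def eq_commute[of "F (flip _ _)"] mult.commute
        cong: conj_cong)
  also have "\<dots> = (\<Sum>i\<in>N. \<Sum>A\<in>Pow N. \<Sum>v\<in>V. (L v A - L v (flip i A))^2)"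
  proof (intro sum.cong refl)
    fix i A assume "i \<in> N" "A \<in> Pow N"
    then have "A \<subseteq> N" "flip i A \<subseteq> N" by (auto simp: flip_subset)
    then show "2 * of_bool (F A \<noteq> F (flip i A)) = (\<Sum>v\<in>V. (L v A - L v (flip i A))^2)"
      unfolding L_def using sum_sq_indicator_diff[OF \<open>finite V\<close> F_in_V F_in_V] by simp
  qed
  also have "\<dots> = (\<Sum>v\<in>V. \<Sum>i\<in>N. \<Sum>A\<in>Pow N. (L v A - L v (flip i A))^2)"
    by (subst sum.swap) (simp add: sum.swap[of _ "Pow N"])
  also have "\<dots> \<le> (\<Sum>v\<in>V. 4 * real (D * (card V - 1)) * (\<Sum>A\<in>Pow N. (L v A)^2))"
  proof (intro sum_mono)
    fix v assume "v \<in> V"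
    then have "cube_poly N (D * (card V - 1)) (L v)"
      unfolding L_def using assms(1) \<open>finite V\<close>
      by (intro cube_poly_level_indicator) (auto simp: V_def)
    then show "(\<Sum>i\<in>N. \<Sum>A\<in>Pow N. (L v A - L v (flip i A))^2)
                 \<le> 4 * real (D * (card V - 1)) * (\<Sum>A\<in>Pow N. (L v A)^2)"
      using assms(2) by (rule total_influence_le)
  qed
  also have "\<dots> = 4 * real (D * (card V - 1)) * (\<Sum>A\<in>Pow N. \<Sum>v\<in>V. (L v A)^2)"
    by (simp add: sum_distrib_left sum.swap[of _ V])
  also have "\<dots> = 4 * real (D * (card V - 1)) * 2 ^ card N"
  proof -
    have "(\<Sum>v\<in>V. (L v A)^2) = 1" if "A \<subseteq> N" for A
    proof -
      have "(\<Sum>v\<in>V. (L v A)^2) = (\<Sum>v\<in>V. if v = F A then 1 else 0)"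
        by (intro sum.cong) (auto simp: L_def)
      then show ?thesis using F_in_V[OF that] \<open>finite V\<close> by simp
    qed
    then show ?thesis using assms(2) by (simp add: card_Pow)
  qed
  also have "\<dots> = 2 * real (2 * D * (card V - 1) * 2 ^ card N)"
    by simp
  finally show ?thesis
    unfolding V_def by linarith
qed

lemma card_vars_le:
  assumes "finite N" "coeffs_within N d c"
  shows "card (\<Union>{S. c S \<noteq> 0}) \<le> 2 ^ d * d * (card (zeta c ` Pow N) - 1)"
proof -
  define R where "R = \<Union>{S. c S \<noteq> 0}"
  define k where "k = card (zeta c ` Pow N)"
  define cnt where "cnt i = card {A. A \<subseteq> N \<and> zeta c (flip i A) \<noteq> zeta c A}" for i
  have "R \<subseteq> N" using assms(2) by (auto simp: R_def coeffs_within_def)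
  have "card R * (2 * 2 ^ card N) = (\<Sum>i\<in>R. 2 * 2 ^ card N)" by simp
  also have "\<dots> \<le> (\<Sum>i\<in>R. 2 ^ d * cnt i)"
    unfolding R_def cnt_def using card_sensitive_ge[OF assms] by (intro sum_mono) blast
  also have "\<dots> \<le> 2 ^ d * (\<Sum>i\<in>N. cnt i)"
    unfolding sum_distrib_left[symmetric] using \<open>R \<subseteq> N\<close> assms(1)
    by (intro mult_left_mono sum_mono2) auto
  also have "\<dots> \<le> 2 ^ d * (2 * d * (k - 1) * 2 ^ card N)"
    unfolding cnt_def k_def
    using sum_card_sensitive_le[OF cube_poly_zeta[OF assms] assms(1)] by (intro mult_left_mono) auto
  also have "\<dots> = (2 ^ d * d * (k - 1)) * (2 * 2 ^ card N)" by simp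
  finally show ?thesis
    unfolding R_def k_def by simp
qed

lemma bool_cube_eq_image: "bool_cube n = (\<lambda>A i. of_bool (i \<in> A)) ` Pow {..<n}"
proof (intro equalityI subsetI)
  fix x assume x: "x \<in> bool_cube n"
  have "x j = of_bool (j \<in> {i. i < n \<and> x i = 1})" for j
    using x unfolding bool_cube_def by (cases "j < n") auto
  then show "x \<in> (\<lambda>A i. of_bool (i \<in> A)) ` Pow {..<n}"
    by (intro image_eqI[of _ _ "{i. i < n \<and> x i = 1}"]) auto
qed (auto simp: bool_cube_def)

lemma ml_eval_indicator:
  assumes "A \<subseteq> {..<n}"
  shows "ml_eval n c (\<lambda>i. of_bool (i \<in> A)) = zeta c A"
proof -
  have "Pow {..<n} \<inter> {S. S \<subseteq> A} = Pow A"
    using assms by auto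
  moreover have "ml_eval n c (\<lambda>i. of_bool (i \<in> A)) = (\<Sum>S\<in>Pow {..<n}. c S * of_bool (S \<subseteq> A))"
    unfolding ml_eval_def by (intro sum.cong refl) (auto simp: prod_of_bool_mem finite_subset)
  ultimately show ?thesis
    by (simp add: zeta_def)
qed

lemma ml_eval_image_bool_cube: "ml_eval n c ` bool_cube n = zeta c ` Pow {..<n}"
  unfolding bool_cube_eq_image image_image using ml_eval_indicator by (intro image_cong) auto

lemma card_support_le:
  assumes "finite N" "coeffs_within N d c"
  shows "card {S. c S \<noteq> 0} \<le> 2 ^ ((2 * d + card (zeta c ` Pow N)) * d)"
proof -
  define R where "R = \<Union>{S. c S \<noteq> 0}"
  define k where "k = card (zeta c ` Pow N)"
  have "finite R"
    using assms by (auto simp: R_def coeffs_within_def intro: finite_subset)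
  have "card R \<le> 2 ^ d * 2 ^ d * (k - 1)"
    using card_vars_le[OF assms] less_exp[of d] unfolding R_def k_def
    by (meson le_trans less_imp_le_nat mult_le_mono mult_le_mono1 order_refl)
  also have "\<dots> < 2 ^ d * 2 ^ d * 2 ^ k"
    using le_less_trans[OF diff_le_self less_exp] by simp
  finally have "card R + 1 \<le> 2 ^ (2 * d + k)"
    by (simp add: power_add mult_2)
  have "card {S. c S \<noteq> 0} \<le> card {S. S \<subseteq> R \<and> card S \<le> d}"
    using \<open>finite R\<close> assms(2) by (intro card_mono) (auto simp: R_def coeffs_within_def)
  also have "\<dots> \<le> (card R + 1) ^ d"
    using \<open>finite R\<close> by (rule card_small_subsets_le)
  also have "\<dots> \<le> 2 ^ ((2 * d + k) * d)"
    unfolding power_mult using \<open>card R + 1 \<le> 2 ^ (2 * d + k)\<close> by (simp add: power_mono)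
  finally show ?thesis
    unfolding k_def .
qed

theorem lemma6p3:
  fixes n d :: nat and c :: "nat set \<Rightarrow> real"
  assumes "is_multilinear n c"
    and "degree_le c d"
  shows "real (card (ml_eval n c ` bool_cube n))
           \<ge> log 2 (real (sparsity c)) / (2 * real d ^ 2) - 2"
proof -
  define k where "k = card (ml_eval n c ` bool_cube n)"
  have "coeffs_within {..<n} d c"
    using assms by (auto simp: coeffs_within_def is_multilinear_def degree_le_def)
  then have sparse: "sparsity c \<le> 2 ^ ((2 * d + k) * d)"
    unfolding sparsity_def k_def ml_eval_image_bool_cube by (intro card_support_le) auto
  show ?thesis
  proof (cases "d = 0 \<or> sparsity c = 0")
    case False
    then have "log 2 (sparsity c) \<le> real ((2 * d + k) * d)"
      using sparse by (intro log2_of_power_le) auto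
    also have "\<dots> \<le> real ((k + 2) * (2 * d ^ 2))"
      unfolding of_nat_le_iff
      by (simp add: add_mult_distrib2 mult.commute power2_eq_square trans_le_add2)
    finally have "log 2 (sparsity c) \<le> (real k + 2) * (2 * real d ^ 2)"
      by (simp add: algebra_simps)
    then have "log 2 (sparsity c) / (2 * real d ^ 2) \<le> real k + 2"
      using False by (subst pos_divide_le_eq) auto
    then show ?thesis
      unfolding k_def by linarith
  qed (auto simp: log_def) \<comment> \<open>in HOL, log 2 0 = 0 and x / 0 = 0\<close>
qed

end
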